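(* Let $N_1,N_2$ be free abelian groups of rank $n$ and $\Sigma_1\subset(N_1)_{\mathbf R}$, $\Sigma_2\subset(N_2)_{\mathbf R}$ amply equivalent complete fans with bijection $\Psi:\Sigma_1(1)\to\Sigma_2(1)$ preserving primitive collections and relations among ray generators. Then there is a $\mathbf Q$-linear isomorphism $\Phi:(N_1)_{\mathbf Q}\to(N_2)_{\mathbf Q}$ such that (1) $\Phi(u_\rho)=u_{\Psi(\rho)}$ for all $\rho\in\Sigma_1(1)$; (2) if $\Phi_{\mathbf R}$ is its $\mathbf R$-linear extension, a cone $\sigma_1\subset(N_1)_{\mathbf R}$ is a cone of $\Sigma_1$ if and only if $\Phi_{\mathbf R}(\sigma_1)$ is a cone of $\Sigma_2$. Moreover, (3) $\Phi$ induces an isomorphism $\Gamma(G_1)_{\mathbf Q}\cong\Gamma(G_2)_{\mathbf Q}$, namely the unique map $\varphi$ making the diagram with exact rows $0\to\Gamma(G_i)_{\mathbf Q}\to\mathbf Q^{\Sigma(1)}\to(N_i)_{\mathbf Q}\to0$ ($i=1,2$), identity in the middle and $\Phi$ on the right, commute.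
   Context: For a fan $\Sigma$: rays $\Sigma(1)$, primitive generators $u_\rho$. A primitive collection is $C\subset\Sigma(1)$ not contained in $\sigma(1)$ for any cone $\sigma$ while every proper subset is. Complete fans $\Sigma_1\subset(N_1)_{\mathbf R},\Sigma_2\subset(N_2)_{\mathbf R}$ (equal ranks) are amply equivalent via a bijection $\Psi:\Sigma_1(1)\to\Sigma_2(1)$ if $C$ is a primitive collection of $\Sigma_1$ iff $\Psi(C)$ is one of $\Sigma_2$, and for all integers $(a_\rho)_{\rho\in\Sigma_1(1)}$, $\sum a_\rho u_\rho=0\iff\sum a_\rho u_{\Psi(\rho)}=0$. $G_i=\mathrm{Hom}(\mathrm{Cl}(X_{\Sigma_i}),\mathbf C^\times)$, and $\Gamma(G_i)=\{b\in\mathbf Z^{\Sigma_i(1)}:\sum b_\rho u_\rho=0\}$ is its group of one-parameter subgroups. $\mathbf Q^{\Sigma(1)}$ denotes $\mathbf Q^{\Sigma_1(1)}$ identified with $\mathbf Q^{\Sigma_2(1)}$ via $\Psi$, with maps $e_\rho\mapsto u_\rho$ onto $(N_1)_{\mathbf Q}$ and $e_\rho\mapsto u_{\Psi(\rho)}$ onto $(N_2)_{\mathbf Q}$. *)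

theory Defs
  imports "HOL-Analysis.Analysis"
begin

text \<open>The lattice N = Z^n inside N_R = R^n (n = CARD('n)); N_Q = Q^n.\<close>

definition lattice :: "(real^'n) set" where
  "lattice = {x. \<forall>i. x $ i \<in> \<int>}"

definition rat_vecs :: "(real^'n) set" where
  "rat_vecs = {x. \<forall>i. x $ i \<in> \<rat>}"

definition rat_poly_cone :: "(real^'n) set \<Rightarrow> bool" where
  "rat_poly_cone \<sigma> \<longleftrightarrow> (\<exists>S. finite S \<and> S \<subseteq> lattice \<and>
      \<sigma> = {\<Sum>v\<in>S. c v *\<^sub>R v | c. \<forall>v\<in>S. c v \<ge> 0})"

definition sc_rat_cone :: "(real^'n) set \<Rightarrow> bool" where
  "sc_rat_cone \<sigma> \<longleftrightarrow> rat_poly_cone \<sigma> \<and> \<sigma> \<inter> uminus ` \<sigma> = {0}"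

definition fan :: "(real^'n) set set \<Rightarrow> bool" where
  "fan \<Sigma> \<longleftrightarrow> finite \<Sigma> \<and> (\<forall>\<sigma>\<in>\<Sigma>. sc_rat_cone \<sigma>)
     \<and> (\<forall>\<sigma>\<in>\<Sigma>. \<forall>\<tau>. \<tau> face_of \<sigma> \<and> \<tau> \<noteq> {} \<longrightarrow> \<tau> \<in> \<Sigma>)
     \<and> (\<forall>\<sigma>\<in>\<Sigma>. \<forall>\<tau>\<in>\<Sigma>. (\<sigma> \<inter> \<tau>) face_of \<sigma> \<and> (\<sigma> \<inter> \<tau>) face_of \<tau>)"

definition complete_fan :: "(real^'n) set set \<Rightarrow> bool" where
  "complete_fan \<Sigma> \<longleftrightarrow> fan \<Sigma> \<and> \<Union>\<Sigma> = UNIV"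

definition rays :: "(real^'n) set set \<Rightarrow> (real^'n) set set" where
  "rays \<Sigma> = {\<rho>\<in>\<Sigma>. dim \<rho> = 1}"

definition prim_gen :: "(real^'n) set \<Rightarrow> real^'n" where
  "prim_gen \<rho> = (THE u. u \<in> \<rho> \<inter> lattice \<and> u \<noteq> 0 \<and>
                     (\<forall>w\<in>\<rho> \<inter> lattice. \<exists>k::int. w = of_int k *\<^sub>R u))"

definition cone_rays :: "(real^'n) set set \<Rightarrow> (real^'n) set \<Rightarrow> (real^'n) set set" where
  "cone_rays \<Sigma> \<sigma> = {\<rho>\<in>rays \<Sigma>. \<rho> face_of \<sigma>}"

definition primitive_collection :: "(real^'n) set set \<Rightarrow> (real^'n) set set \<Rightarrow> bool" where
  "primitive_collection \<Sigma> C \<longleftrightarrow> C \<subseteq> rays \<Sigma>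
     \<and> (\<forall>\<sigma>\<in>\<Sigma>. \<not> C \<subseteq> cone_rays \<Sigma> \<sigma>)
     \<and> (\<forall>D. D \<subset> C \<longrightarrow> (\<exists>\<sigma>\<in>\<Sigma>. D \<subseteq> cone_rays \<Sigma> \<sigma>))"

definition amply_equivalent ::
  "(real^'n) set set \<Rightarrow> (real^'n) set set \<Rightarrow> ((real^'n) set \<Rightarrow> (real^'n) set) \<Rightarrow> bool" where
  "amply_equivalent \<Sigma>1 \<Sigma>2 \<Psi> \<longleftrightarrow> complete_fan \<Sigma>1 \<and> complete_fan \<Sigma>2
     \<and> bij_betw \<Psi> (rays \<Sigma>1) (rays \<Sigma>2)
     \<and> (\<forall>C. C \<subseteq> rays \<Sigma>1 \<longrightarrow> (primitive_collection \<Sigma>1 C \<longleftrightarrow> primitive_collection \<Sigma>2 (\<Psi> ` C)))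
     \<and> (\<forall>a :: (real^'n) set \<Rightarrow> int.
          (\<Sum>\<rho>\<in>rays \<Sigma>1. of_int (a \<rho>) *\<^sub>R prim_gen \<rho>) = 0 \<longleftrightarrow>
          (\<Sum>\<rho>\<in>rays \<Sigma>1. of_int (a \<rho>) *\<^sub>R prim_gen (\<Psi> \<rho>)) = 0)"

end

theory Submission
  imports Defs
begin

text \<open>Every cone of a complete fan is the positive hull of the primitive generators of its rays,
  so these generators span. Integral relations among the \<open>u\<^sub>\<rho>\<close> and the \<open>u\<^sub>\<Psi>\<^sub>(\<^sub>\<rho>\<^sub>)\<close> coincide, hence so
  do rational ones, and \<open>u\<^sub>\<rho> \<mapsto> u\<^sub>\<Psi>\<^sub>(\<^sub>\<rho>\<^sub>)\<close> extends to a rational matrix \<open>A\<close>, invertible because the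
  \<open>u\<^sub>\<Psi>\<^sub>(\<^sub>\<rho>\<^sub>)\<close> span too. A set of rays lies in a common cone iff it contains no primitive
  collection, so \<open>\<Psi>\<close> and \<open>\<Psi>\<^sup>-\<^sup>1\<close> preserve lying in a common cone; thus \<open>A\<close> and \<open>A\<^sup>-\<^sup>1\<close> map each
  cone into a cone of the other fan, and the face condition of fans makes \<open>A \<sigma>\<close> itself a cone.\<close>

section \<open>Positive hulls\<close>

definition pos_hull :: "'a::real_vector set \<Rightarrow> 'a set" where
  "pos_hull S = {\<Sum>v\<in>S. c v *\<^sub>R v | c. \<forall>v\<in>S. c v \<ge> 0}"

lemma pos_hullI: "(\<And>v. v \<in> S \<Longrightarrow> c v \<ge> 0) \<Longrightarrow> x = (\<Sum>v\<in>S. c v *\<^sub>R v) \<Longrightarrow> x \<in> pos_hull S"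
  unfolding pos_hull_def by blast

lemma pos_hullE:
  assumes "x \<in> pos_hull S"
  obtains c where "\<And>v. v \<in> S \<Longrightarrow> c v \<ge> 0" "x = (\<Sum>v\<in>S. c v *\<^sub>R v)"
  using assms unfolding pos_hull_def by blast

lemma zero_in_pos_hull: "0 \<in> pos_hull S"
  by (rule pos_hullI[where c="\<lambda>_. 0"]) auto

lemma pos_hull_add_scaleR:
  assumes "x \<in> pos_hull S" "y \<in> pos_hull S" "a \<ge> 0" "b \<ge> 0"
  shows "a *\<^sub>R x + b *\<^sub>R y \<in> pos_hull S"
proof -
  obtain c where c: "\<And>v. v \<in> S \<Longrightarrow> c v \<ge> 0" "x = (\<Sum>v\<in>S. c v *\<^sub>R v)"
    using pos_hullE[OF assms(1)] by blast
  obtain d where d: "\<And>v. v \<in> S \<Longrightarrow> d v \<ge> 0" "y = (\<Sum>v\<in>S. d v *\<^sub>R v)"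
    using pos_hullE[OF assms(2)] by blast
  show ?thesis
  proof (rule pos_hullI[where c="\<lambda>v. a * c v + b * d v"])
    show "a * c v + b * d v \<ge> 0" if "v \<in> S" for v
      using c d that assms by simp
    show "a *\<^sub>R x + b *\<^sub>R y = (\<Sum>v\<in>S. (a * c v + b * d v) *\<^sub>R v)"
      by (simp add: c(2) d(2) scaleR_sum_right scaleR_add_left sum.distrib)
  qed
qed

lemma pos_hull_scaleR: "x \<in> pos_hull S \<Longrightarrow> a \<ge> 0 \<Longrightarrow> a *\<^sub>R x \<in> pos_hull S"
  using pos_hull_add_scaleR[OF _ zero_in_pos_hull, of x S a 0] by simp

lemma pos_hull_add: "x \<in> pos_hull S \<Longrightarrow> y \<in> pos_hull S \<Longrightarrow> x + y \<in> pos_hull S"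
  using pos_hull_add_scaleR[of x S y 1 1] by simp

lemma convex_pos_hull: "convex (pos_hull S)"
  unfolding convex_def using pos_hull_add_scaleR by blast

lemma pos_hull_sum:
  "finite I \<Longrightarrow> (\<And>i. i \<in> I \<Longrightarrow> x i \<in> pos_hull S) \<Longrightarrow> (\<And>i. i \<in> I \<Longrightarrow> d i \<ge> 0)
    \<Longrightarrow> (\<Sum>i\<in>I. d i *\<^sub>R x i) \<in> pos_hull S"
  by (induction I rule: finite_induct) (auto intro!: zero_in_pos_hull pos_hull_add pos_hull_scaleR)

lemma pos_hull_superset: "finite S \<Longrightarrow> S \<subseteq> pos_hull S"
proof
  fix v assume "finite S" "v \<in> S"
  then show "v \<in> pos_hull S"
    by (intro pos_hullI[where c="\<lambda>w. if w = v then 1 else 0"]) (auto simp: sum.remove[of S v])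
qed

lemma pos_hull_subset_pos_hull:
  assumes "T \<subseteq> pos_hull S"
  shows "pos_hull T \<subseteq> pos_hull S"
proof
  fix x assume "x \<in> pos_hull T"
  then obtain c where c: "\<And>v. v \<in> T \<Longrightarrow> c v \<ge> 0" "x = (\<Sum>v\<in>T. c v *\<^sub>R v)"
    by (blast elim: pos_hullE)
  show "x \<in> pos_hull S"
  proof (cases "finite T")
    case True
    then show ?thesis
      unfolding c(2) using assms c(1) by (intro pos_hull_sum) auto
  next
    case False
    then show ?thesis
      unfolding c(2) by (simp add: zero_in_pos_hull)
  qed
qed

lemma pos_hull_mono: "finite S \<Longrightarrow> T \<subseteq> S \<Longrightarrow> pos_hull T \<subseteq> pos_hull S"
  using pos_hull_subset_pos_hull pos_hull_superset by blast

lemma linear_image_pos_hull_subset: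
  assumes "linear L" "finite S"
  shows "L ` pos_hull S \<subseteq> pos_hull (L ` S)"
proof
  fix y assume "y \<in> L ` pos_hull S"
  then obtain c where c: "\<And>v. v \<in> S \<Longrightarrow> c v \<ge> 0" "y = L (\<Sum>v\<in>S. c v *\<^sub>R v)"
    by (blast elim: pos_hullE)
  have "y = (\<Sum>v\<in>S. c v *\<^sub>R L v)"
    unfolding c(2) using assms(1) by (simp add: linear_sum linear_scale)
  also have "\<dots> \<in> pos_hull (L ` S)"
    using assms(2) c(1) pos_hull_superset[of "L ` S"] by (intro pos_hull_sum) auto
  finally show "y \<in> pos_hull (L ` S)" .
qed

lemma pos_hull_subset_span: "pos_hull S \<subseteq> span S"
  by (auto elim!: pos_hullE intro!: span_sum span_scale intro: span_base)

lemma pos_hull_singleton: "pos_hull {v} = {t *\<^sub>R v | t. t \<ge> 0}"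
  unfolding pos_hull_def by auto

lemma dim_pos_hull_singleton:
  fixes v :: "'a::euclidean_space"
  shows "dim (pos_hull {v}) = (if v = 0 then 0 else 1)"
proof -
  have "span (pos_hull {v}) = span {v}"
    unfolding span_eq using pos_hull_subset_span[of "{v}"] pos_hull_superset[of "{v}"] span_superset
    by blast
  then show ?thesis
    by (metis dim_span dim_singleton)
qed

lemma pos_hull_remove_redundant:
  assumes "finite S" "v \<in> pos_hull (S - {v})"
  shows "pos_hull (S - {v}) = pos_hull S"
proof
  show "pos_hull (S - {v}) \<subseteq> pos_hull S"
    using pos_hull_mono[OF assms(1)] by blast
  show "pos_hull S \<subseteq> pos_hull (S - {v})"
  proof
    fix x assume "x \<in> pos_hull S"
    then obtain c where c: "\<And>w. w \<in> S \<Longrightarrow> c w \<ge> 0" "x = (\<Sum>w\<in>S. c w *\<^sub>R w)"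
      by (blast elim: pos_hullE)
    have "x = c v *\<^sub>R v + (\<Sum>w\<in>S-{v}. c w *\<^sub>R w)" if "v \<in> S"
      using c(2) assms(1) that by (simp add: sum.remove)
    moreover have "x = (\<Sum>w\<in>S-{v}. c w *\<^sub>R w)" if "v \<notin> S"
      using c(2) that by simp
    moreover have "(\<Sum>w\<in>S-{v}. c w *\<^sub>R w) \<in> pos_hull (S - {v})"
      using c(1) by (intro pos_hullI) auto
    moreover have "c v *\<^sub>R v \<in> pos_hull (S - {v})" if "v \<in> S"
      using assms(2) c(1) that by (intro pos_hull_scaleR) auto
    ultimately show "x \<in> pos_hull (S - {v})"
      by (cases "v \<in> S") (auto intro: pos_hull_add)
  qed
qed

lemma exists_irredundant_generators:
  "finite S \<Longrightarrow> \<exists>S'\<subseteq>S. pos_hull S' = pos_hull S \<and> (\<forall>v\<in>S'. v \<notin> pos_hull (S' - {v}))"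
proof (induction "card S" arbitrary: S rule: less_induct)
  case less
  show ?case
  proof (cases "\<exists>v\<in>S. v \<in> pos_hull (S - {v})")
    case True
    then obtain v where v: "v \<in> S" "v \<in> pos_hull (S - {v})" by blast
    then have "card (S - {v}) < card S"
      using less.prems by (meson card_Diff1_less)
    then obtain S' where "S' \<subseteq> S - {v}" "pos_hull S' = pos_hull (S - {v})"
        "\<forall>v\<in>S'. v \<notin> pos_hull (S' - {v})"
      using less.hyps[of "S - {v}"] less.prems by auto
    then show ?thesis
      using pos_hull_remove_redundant[OF less.prems v(2)] by blast
  qed blast
qed

lemma pointed_pos_hull_sum_eq_0:
  assumes S: "finite S" and pointed: "pos_hull S \<inter> uminus ` pos_hull S = {0}"
    and nonneg: "\<And>w. w \<in> S \<Longrightarrow> d w \<ge> 0" and sum: "(\<Sum>w\<in>S. d w *\<^sub>R w) = 0" and v: "v \<in> S"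
  shows "d v *\<^sub>R v = 0"
proof -
  have p: "d v *\<^sub>R v \<in> pos_hull S"
    using nonneg v S pos_hull_superset by (blast intro: pos_hull_scaleR)
  have "(\<Sum>w\<in>S-{v}. d w *\<^sub>R w) \<in> pos_hull S"
    using pos_hull_mono[OF S, of "S - {v}"] nonneg by (blast intro: pos_hullI)
  moreover have "d v *\<^sub>R v = - (\<Sum>w\<in>S-{v}. d w *\<^sub>R w)"
    using sum S v by (simp add: sum.remove eq_neg_iff_add_eq_0)
  ultimately show ?thesis
    using p pointed by blast
qed

lemma irredundant_generator_nonzero:
  "\<forall>v\<in>S. v \<notin> pos_hull (S - {v}) \<Longrightarrow> w \<in> S \<Longrightarrow> w \<noteq> 0"
  using zero_in_pos_hull by fastforce

lemma pointed_pos_hull_irredundant_coeff_eq_0: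
  assumes S: "finite S" and pointed: "pos_hull S \<inter> uminus ` pos_hull S = {0}"
    and irredundant: "\<forall>v\<in>S. v \<notin> pos_hull (S - {v})" and v: "v \<in> S"
    and nonneg: "\<And>w. w \<in> S \<Longrightarrow> \<gamma> w \<ge> 0" and sum: "(\<Sum>w\<in>S. \<gamma> w *\<^sub>R w) = s *\<^sub>R v"
    and w: "w \<in> S" "w \<noteq> v"
  shows "\<gamma> w = 0"
proof -
  have rest: "(\<Sum>w\<in>S-{v}. \<gamma> w *\<^sub>R w) = (s - \<gamma> v) *\<^sub>R v"
    using sum S v by (simp add: sum.remove algebra_simps)
  have "s \<le> \<gamma> v"
  proof (rule ccontr)
    assume "\<not> s \<le> \<gamma> v"
    then have "v = (1 / (s - \<gamma> v)) *\<^sub>R (\<Sum>w\<in>S-{v}. \<gamma> w *\<^sub>R w)"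
      unfolding rest by simp
    also have "\<dots> \<in> pos_hull (S - {v})"
      using nonneg \<open>\<not> s \<le> \<gamma> v\<close> by (intro pos_hull_scaleR pos_hullI[OF _ refl]) auto
    finally show False
      using irredundant v by blast
  qed
  define \<delta> where "\<delta> = \<gamma>(v := \<gamma> v - s)"
  have "(\<Sum>w\<in>S. \<delta> w *\<^sub>R w) = (\<gamma> v - s) *\<^sub>R v + (\<Sum>w\<in>S-{v}. \<gamma> w *\<^sub>R w)"
    using S v unfolding \<delta>_def by (simp add: sum.remove)
  also have "\<dots> = 0"
    unfolding rest by (simp add: algebra_simps)
  finally have "\<delta> w *\<^sub>R w = 0"
    using \<open>s \<le> \<gamma> v\<close> nonneg by (intro pointed_pos_hull_sum_eq_0[OF S pointed _ _ w(1)]) (auto simp: \<delta>_def)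
  then show ?thesis
    using irredundant_generator_nonzero[OF irredundant w(1)] w(2) by (simp add: \<delta>_def)
qed

lemma pointed_pos_hull_irredundant_ray_face:
  assumes S: "finite S" and pointed: "pos_hull S \<inter> uminus ` pos_hull S = {0}"
    and irredundant: "\<forall>v\<in>S. v \<notin> pos_hull (S - {v})" and v: "v \<in> S"
  shows "pos_hull {v} face_of pos_hull S"
  unfolding face_of_def
proof (intro conjI ballI impI)
  show "pos_hull {v} \<subseteq> pos_hull S"
    using pos_hull_mono[OF S] v by blast
  show "convex (pos_hull {v})"
    by (rule convex_pos_hull)
  fix a b x
  assume a: "a \<in> pos_hull S" and b: "b \<in> pos_hull S"
    and x: "x \<in> pos_hull {v}" and seg: "x \<in> open_segment a b"
  obtain \<alpha> where \<alpha>: "\<And>w. w \<in> S \<Longrightarrow> \<alpha> w \<ge> 0" "a = (\<Sum>w\<in>S. \<alpha> w *\<^sub>R w)"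
    using a by (blast elim: pos_hullE)
  obtain \<beta> where \<beta>: "\<And>w. w \<in> S \<Longrightarrow> \<beta> w \<ge> 0" "b = (\<Sum>w\<in>S. \<beta> w *\<^sub>R w)"
    using b by (blast elim: pos_hullE)
  obtain s where s: "s \<ge> 0" "x = s *\<^sub>R v"
    using x unfolding pos_hull_singleton by blast
  obtain t where t: "0 < t" "t < 1" "x = (1 - t) *\<^sub>R a + t *\<^sub>R b"
    using seg unfolding in_segment by blast
  have "(\<Sum>w\<in>S. ((1 - t) * \<alpha> w + t * \<beta> w) *\<^sub>R w) = s *\<^sub>R v"
    unfolding s(2)[symmetric] t(3) \<alpha>(2) \<beta>(2)
    by (simp add: scaleR_sum_right scaleR_add_left sum.distrib)
  then have combination_vanishes: "(1 - t) * \<alpha> w + t * \<beta> w = 0" if "w \<in> S" "w \<noteq> v" for w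
    using \<alpha>(1) \<beta>(1) t that
    by (intro pointed_pos_hull_irredundant_coeff_eq_0[OF S pointed irredundant v]) auto
  have vanish: "\<alpha> w = 0 \<and> \<beta> w = 0" if "w \<in> S" "w \<noteq> v" for w
  proof -
    have "(1 - t) * \<alpha> w \<ge> 0" "t * \<beta> w \<ge> 0"
      using \<alpha>(1)[OF that(1)] \<beta>(1)[OF that(1)] t by simp_all
    then have "(1 - t) * \<alpha> w = 0" "t * \<beta> w = 0"
      using combination_vanishes[OF that] by linarith+
    then show ?thesis
      using t by simp
  qed
  have "(\<Sum>w\<in>S. c w *\<^sub>R w) = c v *\<^sub>R v" if "\<And>w. w \<in> S \<Longrightarrow> w \<noteq> v \<Longrightarrow> c w = 0" for c
    using S v that by (simp add: sum.remove sum.neutral)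
  then show "a \<in> pos_hull {v}" "b \<in> pos_hull {v}"
    unfolding pos_hull_singleton \<alpha>(2) \<beta>(2) using vanish \<alpha>(1)[OF v] \<beta>(1)[OF v] by blast+
qed

section \<open>Matrices with rational entries\<close>

lemma matrix_inv_right: "invertible A \<Longrightarrow> A ** matrix_inv A = mat 1"
  unfolding invertible_def matrix_inv_def by (rule someI2_ex) auto

lemma matrix_inv_left: "invertible A \<Longrightarrow> matrix_inv A ** A = mat 1"
  unfolding invertible_def matrix_inv_def by (rule someI2_ex) auto

lemma invertible_matrix_inv: "invertible A \<Longrightarrow> invertible (matrix_inv A)"
  using matrix_inv_left matrix_inv_right invertible_def by blast

lemma matrix_inv_cancel_left: "invertible A \<Longrightarrow> matrix_inv A *v (A *v x) = x"
  by (simp add: matrix_vector_mul_assoc matrix_inv_left)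

lemma matrix_inv_cancel_right: "invertible A \<Longrightarrow> A *v (matrix_inv A *v x) = x"
  by (simp add: matrix_vector_mul_assoc matrix_inv_right)

lemma invertible_if_range_spans:
  fixes A :: "real^'n^'n"
  assumes "span T = UNIV" "T \<subseteq> range ((*v) A)"
  shows "invertible A"
proof -
  have "span T \<subseteq> span (range ((*v) A))"
    using assms(2) by (rule span_mono)
  also have "\<dots> = range ((*v) A)"
    using linear_span_image[OF matrix_vector_mul_linear, of A UNIV] by simp
  finally have "surj ((*v) A)"
    using assms(1) by blast
  then show ?thesis
    unfolding invertible_right_inverse matrix_right_invertible_surjective .
qed

lemma matrix_vector_mult_sum_scaleR:
  fixes A :: "real^'n^'m"
  shows "A *v (\<Sum>r\<in>R. c r *\<^sub>R v r) = (\<Sum>r\<in>R. c r *\<^sub>R (A *v v r))"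
  using matrix_vector_mul_linear[of A] by (simp add: linear_sum linear_scale o_def)

lemma invertible_mult_vec_eq_0:
  assumes "invertible A"
  shows "A *v x = 0 \<longleftrightarrow> x = 0"
proof
  assume "A *v x = 0"
  then have "matrix_inv A *v (A *v x) = 0"
    by simp
  then show "x = 0"
    by (simp only: matrix_inv_cancel_left[OF assms])
qed simp

definition rat_matrices :: "(real^'n^'m) set" where
  "rat_matrices = {A. \<forall>i. A $ i \<in> rat_vecs}"

lemma lattice_subset_rat_vecs: "lattice \<subseteq> rat_vecs"
  unfolding lattice_def rat_vecs_def using Ints_subset_Rats by blast

lemma inner_rat_vecs: "x \<in> rat_vecs \<Longrightarrow> y \<in> rat_vecs \<Longrightarrow> x \<bullet> y \<in> \<rat>"
  unfolding rat_vecs_def inner_vec_def by (auto intro!: Rats_sum Rats_mult)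

lemma matrix_vector_mult_rat_vecs: "A \<in> rat_matrices \<Longrightarrow> x \<in> rat_vecs \<Longrightarrow> A *v x \<in> rat_vecs"
  unfolding rat_matrices_def rat_vecs_def matrix_vector_mult_def by (auto intro!: Rats_sum Rats_mult)

lemma matrix_mult_rat_matrices: "A \<in> rat_matrices \<Longrightarrow> B \<in> rat_matrices \<Longrightarrow> A ** B \<in> rat_matrices"
  unfolding rat_matrices_def rat_vecs_def matrix_matrix_mult_def by (auto intro!: Rats_sum Rats_mult)

lemma det_rat_matrices: "A \<in> rat_matrices \<Longrightarrow> det A \<in> \<rat>"
  unfolding rat_matrices_def rat_vecs_def det_def by (auto intro!: Rats_sum Rats_mult Rats_prod)

lemma rat_vecs_solution:
  fixes A :: "real^'n^'n"
  assumes "A \<in> rat_matrices" "det A \<noteq> 0" "b \<in> rat_vecs" "A *v x = b"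
  shows "x \<in> rat_vecs"
proof -
  have "(\<chi> i j. if j = k then b $ i else A $ i $ j) \<in> rat_matrices" for k
    using assms(1,3) unfolding rat_matrices_def rat_vecs_def by auto
  moreover have "x = (\<chi> k. det (\<chi> i j. if j = k then b $ i else A $ i $ j) / det A)"
    using cramer[OF assms(2)] assms(4) by blast
  ultimately show ?thesis
    unfolding rat_vecs_def using det_rat_matrices[OF assms(1)] by (simp add: det_rat_matrices)
qed

lemma matrix_inv_rat_matrices:
  fixes A :: "real^'n^'n"
  assumes "A \<in> rat_matrices" "invertible A"
  shows "matrix_inv A \<in> rat_matrices"
proof -
  have "column j (matrix_inv A) \<in> rat_vecs" for j
  proof (rule rat_vecs_solution[OF assms(1)])
    show "det A \<noteq> 0"
      using assms(2) invertible_det_nz by blast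
    show "axis j 1 \<in> rat_vecs"
      unfolding rat_vecs_def axis_def by simp
    show "A *v column j (matrix_inv A) = axis j 1"
      using matrix_inv_cancel_right[OF assms(2)] by (simp flip: matrix_vector_mult_basis)
  qed
  then show ?thesis
    unfolding rat_matrices_def rat_vecs_def column_def by simp
qed

definition outer_sum :: "('a \<Rightarrow> real^'m) \<Rightarrow> ('a \<Rightarrow> real^'n) \<Rightarrow> 'a set \<Rightarrow> real^'n^'m" where
  "outer_sum w u R = (\<chi> i j. \<Sum>r\<in>R. w r $ i * u r $ j)"

lemma outer_sum_mult_vec: "outer_sum w u R *v z = (\<Sum>r\<in>R. (u r \<bullet> z) *\<^sub>R w r)"
proof -
  have "(\<Sum>j\<in>UNIV. (\<Sum>r\<in>R. w r $ i * u r $ j) * z $ j) = (\<Sum>r\<in>R. (\<Sum>j\<in>UNIV. u r $ j * z $ j) * w r $ i)"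
    for i
    by (simp add: sum_distrib_left sum_distrib_right mult_ac sum.swap[of _ R])
  then show ?thesis
    unfolding outer_sum_def matrix_vector_mult_def inner_vec_def by (simp add: vec_eq_iff sum_component)
qed

lemma outer_sum_rat_matrices:
  "(\<And>r. r \<in> R \<Longrightarrow> w r \<in> rat_vecs \<and> u r \<in> rat_vecs) \<Longrightarrow> outer_sum w u R \<in> rat_matrices"
  unfolding outer_sum_def rat_matrices_def rat_vecs_def by (auto intro!: Rats_sum Rats_mult)

lemma invertible_outer_sum_self:
  fixes u :: "'a \<Rightarrow> real^'n"
  assumes R: "finite R" and spanning: "span (u ` R) = UNIV"
  shows "invertible (outer_sum u u R)"
proof -
  have "z = 0" if z: "outer_sum u u R *v z = 0" for z
  proof -
    have "(\<Sum>r\<in>R. (u r \<bullet> z) * (u r \<bullet> z)) = z \<bullet> (outer_sum u u R *v z)"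
      unfolding outer_sum_mult_vec by (simp add: inner_sum_right inner_commute)
    then have "(\<Sum>r\<in>R. (u r \<bullet> z) * (u r \<bullet> z)) = 0"
      using z by simp
    then have "\<forall>r\<in>R. (u r \<bullet> z) * (u r \<bullet> z) = 0"
      by (subst (asm) sum_nonneg_eq_0_iff[OF R]) simp_all
    then have "orthogonal z v" if "v \<in> u ` R" for v
      using that by (auto simp: orthogonal_def inner_commute)
    then have "orthogonal z z"
      using orthogonal_to_span[of z "u ` R"] spanning by blast
    then show "z = 0"
      by (simp add: orthogonal_self)
  qed
  then show ?thesis
    unfolding invertible_left_inverse matrix_left_invertible_ker by blast
qed

lemma exists_common_denominator:
  fixes f :: "'a \<Rightarrow> 'b::field_char_0"
  assumes "finite F" "\<And>x. x \<in> F \<Longrightarrow> f x \<in> \<rat>"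
  shows "\<exists>D::int. D > 0 \<and> (\<forall>x\<in>F. of_int D * f x \<in> \<int>)"
proof -
  have "\<exists>d::int. d > 0 \<and> of_int d * f x \<in> \<int>" if x: "x \<in> F" for x
  proof -
    obtain a b :: int where "b > 0" "f x = of_int a / of_int b"
      using Rats_cases'[OF assms(2)[OF x]] by metis
    then show ?thesis
      by (intro exI[of _ b]) simp
  qed
  then obtain d where d: "\<And>x. x \<in> F \<Longrightarrow> d x > 0 \<and> of_int (d x) * f x \<in> \<int>"
    by metis
  have "of_int (prod d F) * f x \<in> \<int>" if "x \<in> F" for x
  proof -
    have "of_int (prod d F) * f x = of_int (prod d (F - {x})) * (of_int (d x) * f x)"
      using assms(1) that by (simp add: prod.remove)
    also have "\<dots> \<in> \<int>"
      using d[OF that] Ints_mult Ints_of_int by blast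
    finally show ?thesis .
  qed
  moreover have "prod d F > 0"
    using d by (simp add: prod_pos)
  ultimately show ?thesis
    by blast
qed

lemma rat_relations_if_int_relations:
  fixes u w :: "'a \<Rightarrow> 'b::real_vector"
  assumes R: "finite R"
    and int_rel: "\<And>a :: 'a \<Rightarrow> int. (\<Sum>r\<in>R. of_int (a r) *\<^sub>R u r) = 0 \<Longrightarrow> (\<Sum>r\<in>R. of_int (a r) *\<^sub>R w r) = 0"
    and q: "\<And>r. r \<in> R \<Longrightarrow> q r \<in> \<rat>" and rel: "(\<Sum>r\<in>R. q r *\<^sub>R u r) = 0"
  shows "(\<Sum>r\<in>R. q r *\<^sub>R w r) = 0"
proof -
  obtain D :: int where D: "D > 0" "\<forall>r\<in>R. of_int D * q r \<in> \<int>"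
    using exists_common_denominator[OF R, of q] q by blast
  define a where "a r = \<lfloor>of_int D * q r\<rfloor>" for r
  have a: "of_int (a r) = of_int D * q r" if "r \<in> R" for r
    unfolding a_def using D(2) that by (metis Ints_cases floor_of_int)
  have scaled: "(\<Sum>r\<in>R. of_int (a r) *\<^sub>R v r) = of_int D *\<^sub>R (\<Sum>r\<in>R. q r *\<^sub>R v r)" for v :: "'a \<Rightarrow> 'b"
    by (simp add: scaleR_sum_right a)
  then have "(\<Sum>r\<in>R. of_int (a r) *\<^sub>R u r) = 0"
    using rel by simp
  then have "(\<Sum>r\<in>R. of_int (a r) *\<^sub>R w r) = 0"
    by (rule int_rel)
  then show ?thesis
    using scaled[of w] D(1) by simp
qed

text \<open>With \<open>P = \<Sum>\<^sub>r u\<^sub>r u\<^sub>r\<^sup>T\<close> and \<open>Q = \<Sum>\<^sub>r w\<^sub>r u\<^sub>r\<^sup>T\<close>, the matrix \<open>Q P\<^sup>-\<^sup>1\<close> is rational, and it sends \<open>u\<^sub>s\<close> to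
  \<open>w\<^sub>s\<close> because \<open>u\<^sub>s = \<Sum>\<^sub>r (u\<^sub>r \<bullet> P\<^sup>-\<^sup>1u\<^sub>s) u\<^sub>r\<close> is a rational relation.\<close>
lemma exists_rat_matrix_mapping:
  fixes u w :: "'a \<Rightarrow> real^'n"
  assumes R: "finite R" and spanning: "span (u ` R) = UNIV"
    and rat: "\<And>r. r \<in> R \<Longrightarrow> u r \<in> rat_vecs \<and> w r \<in> rat_vecs"
    and rel: "\<And>q. (\<And>r. r \<in> R \<Longrightarrow> q r \<in> \<rat>) \<Longrightarrow> (\<Sum>r\<in>R. q r *\<^sub>R u r) = 0 \<Longrightarrow> (\<Sum>r\<in>R. q r *\<^sub>R w r) = 0"
  shows "\<exists>A\<in>rat_matrices. \<forall>r\<in>R. A *v u r = w r"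
proof -
  define P where "P = outer_sum u u R"
  define A where "A = outer_sum w u R ** matrix_inv P"
  have P: "P \<in> rat_matrices" "invertible P"
    unfolding P_def using rat by (auto intro: outer_sum_rat_matrices invertible_outer_sum_self[OF R spanning])
  have "A \<in> rat_matrices"
    unfolding A_def using rat
    by (intro matrix_mult_rat_matrices outer_sum_rat_matrices matrix_inv_rat_matrices P) auto
  moreover have "A *v u s = w s" if s: "s \<in> R" for s
  proof -
    define c where "c r = u r \<bullet> (matrix_inv P *v u s)" for r
    have c_rat: "c r \<in> \<rat>" if "r \<in> R" for r
      unfolding c_def using rat that s
      by (intro inner_rat_vecs matrix_vector_mult_rat_vecs matrix_inv_rat_matrices P) auto
    have expansion: "(\<Sum>r\<in>R. c r *\<^sub>R u r) = u s"
      using matrix_inv_cancel_right[OF P(2)] unfolding c_def P_def outer_sum_mult_vec by simp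
    define q where "q r = c r - (if r = s then 1 else 0)" for r
    have shift: "(\<Sum>r\<in>R. q r *\<^sub>R v r) = (\<Sum>r\<in>R. c r *\<^sub>R v r) - v s" for v :: "'a \<Rightarrow> real^'n"
      using R s by (simp add: q_def scaleR_diff_left sum_subtractf if_distrib[of "\<lambda>x. x *\<^sub>R _"] cong: if_cong)
    have "q r \<in> \<rat>" if "r \<in> R" for r
      using c_rat[OF that] unfolding q_def by simp
    moreover have "(\<Sum>r\<in>R. q r *\<^sub>R u r) = 0"
      unfolding shift using expansion by simp
    ultimately have "(\<Sum>r\<in>R. q r *\<^sub>R w r) = 0"
      by (rule rel)
    then have "(\<Sum>r\<in>R. c r *\<^sub>R w r) = w s"
      unfolding shift by simp
    then show ?thesis
      unfolding A_def c_def by (simp add: matrix_vector_mul_assoc[symmetric] outer_sum_mult_vec)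
  qed
  ultimately show ?thesis
    by blast
qed

section \<open>Fans and primitive generators\<close>

lemma rat_poly_cone_iff_pos_hull:
  "rat_poly_cone \<sigma> \<longleftrightarrow> (\<exists>S. finite S \<and> S \<subseteq> lattice \<and> \<sigma> = pos_hull S)"
  unfolding rat_poly_cone_def pos_hull_def ..

lemma fan_sc_rat_cone: "fan \<Sigma> \<Longrightarrow> \<sigma> \<in> \<Sigma> \<Longrightarrow> sc_rat_cone \<sigma>"
  by (simp add: fan_def)

lemma fan_cone_pos_hull:
  assumes "fan \<Sigma>" "\<sigma> \<in> \<Sigma>"
  obtains S where "finite S" "S \<subseteq> lattice" "\<sigma> = pos_hull S"
  using fan_sc_rat_cone[OF assms] unfolding sc_rat_cone_def rat_poly_cone_iff_pos_hull by blast

lemma fan_cone_pointed: "fan \<Sigma> \<Longrightarrow> \<sigma> \<in> \<Sigma> \<Longrightarrow> \<sigma> \<inter> uminus ` \<sigma> = {0}"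
  using fan_sc_rat_cone sc_rat_cone_def by blast

lemma finite_rays: "fan \<Sigma> \<Longrightarrow> finite (rays \<Sigma>)"
  by (simp add: fan_def rays_def)

lemma finite_cone_rays: "fan \<Sigma> \<Longrightarrow> finite (cone_rays \<Sigma> \<sigma>)"
  unfolding cone_rays_def by (auto intro: finite_subset[OF _ finite_rays])

lemma ray_eq_pos_hull_lattice_vector:
  fixes \<Sigma> :: "(real^'n) set set"
  assumes fan: "fan \<Sigma>" and \<rho>: "\<rho> \<in> rays \<Sigma>"
  obtains v where "v \<in> lattice" "v \<noteq> 0" "\<rho> = pos_hull {v}"
proof -
  have "\<rho> \<in> \<Sigma>" "dim \<rho> = 1"
    using \<rho> unfolding rays_def by auto
  then obtain S where S: "finite S" "S \<subseteq> lattice" "\<rho> = pos_hull S" "\<rho> \<inter> uminus ` \<rho> = {0}"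
    using fan_cone_pos_hull[OF fan] fan_cone_pointed[OF fan] by metis
  obtain v where v: "v \<in> S" "v \<noteq> 0"
  proof -
    have "\<rho> \<noteq> {0}"
      using \<open>dim \<rho> = 1\<close> by auto
    then show thesis
      using that unfolding S(3) pos_hull_def by (force intro!: sum.neutral)
  qed
  have v_in: "v \<in> \<rho>"
    using S(1,3) v(1) pos_hull_superset by blast
  have "\<rho> \<subseteq> pos_hull {v}"
  proof
    fix w assume w: "w \<in> \<rho>"
    have "span {v} = span \<rho>"
      using v_in v(2) \<open>dim \<rho> = 1\<close> by (intro dim_eq_span) auto
    then obtain t where t: "w = t *\<^sub>R v"
      using w span_superset[of \<rho>] by (auto simp: span_singleton)
    have "w = 0" if "t < 0"
    proof -
      have "(- t) *\<^sub>R v \<in> \<rho>"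
        using that v_in S(3) pos_hull_scaleR[of v S "- t"] by simp
      then have "w \<in> uminus ` \<rho>"
        using t by (auto intro!: image_eqI[where x="(- t) *\<^sub>R v"])
      then show "w = 0"
        using w S(4) by blast
    qed
    then show "w \<in> pos_hull {v}"
      unfolding pos_hull_singleton using t by (cases "t < 0") force+
  qed
  moreover have "pos_hull {v} \<subseteq> \<rho>"
    unfolding pos_hull_singleton using v_in S(3) pos_hull_scaleR by blast
  ultimately show thesis
    using that S(2) v by blast
qed

definition is_prim_gen :: "(real^'n) set \<Rightarrow> real^'n \<Rightarrow> bool" where
  "is_prim_gen \<rho> u \<longleftrightarrow> u \<in> \<rho> \<inter> lattice \<and> u \<noteq> 0 \<and> (\<forall>w\<in>\<rho> \<inter> lattice. \<exists>k::int. w = of_int k *\<^sub>R u)"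

lemma lattice_diff: "x \<in> lattice \<Longrightarrow> y \<in> lattice \<Longrightarrow> x - y \<in> lattice"
  unfolding lattice_def by auto

lemma lattice_scaleR_of_int: "x \<in> lattice \<Longrightarrow> of_int k *\<^sub>R x \<in> lattice"
  unfolding lattice_def by auto

lemma lattice_points_on_ray:
  assumes "v \<in> lattice" "v $ i \<noteq> 0" "w \<in> pos_hull {v} \<inter> lattice"
  obtains j :: nat where "w = (real j / \<bar>v $ i\<bar>) *\<^sub>R v"
proof -
  obtain t where t: "t \<ge> 0" "w = t *\<^sub>R v"
    using assms(3) unfolding pos_hull_singleton by blast
  have "t * \<bar>v $ i\<bar> = \<bar>w $ i\<bar>"
    using t by (simp add: abs_mult)
  moreover have "w $ i \<in> \<int>"
    using assms(3) unfolding lattice_def by blast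
  ultimately obtain z where z: "t * \<bar>v $ i\<bar> = of_int z"
    by (metis Ints_abs Ints_cases)
  have "0 \<le> real_of_int z"
    using t(1) by (simp flip: z)
  then have "t * \<bar>v $ i\<bar> = real (nat z)"
    using z by simp
  then have "w = (real (nat z) / \<bar>v $ i\<bar>) *\<^sub>R v"
    using t(2) assms(2) by (simp add: field_simps)
  then show thesis
    by (rule that)
qed

text \<open>The lattice points of the ray are the \<open>(k / \<bar>v\<^sub>i\<bar>) v\<close>; the one with least \<open>k\<^sub>0 > 0\<close> generates
  them all, by division with remainder by \<open>k\<^sub>0\<close>.\<close>
lemma lattice_ray_has_prim_gen:
  assumes v: "v \<in> lattice" "v \<noteq> 0"
  shows "\<exists>u. is_prim_gen (pos_hull {v}) u"
proof -
  obtain i where i: "v $ i \<noteq> 0"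
    using v(2) by (auto simp: vec_eq_iff)
  define d where "d = \<bar>v $ i\<bar>"
  have d: "d > 0"
    using i unfolding d_def by simp
  define K where "K = {k::nat. 0 < k \<and> (real k / d) *\<^sub>R v \<in> lattice}"
  have "v \<in> pos_hull {v} \<inter> lattice"
    using v(1) pos_hull_superset[of "{v}"] by blast
  then obtain j :: nat where j: "v = (real j / d) *\<^sub>R v"
    using lattice_points_on_ray[OF v(1) i] unfolding d_def by blast
  have "j \<noteq> 0"
  proof
    assume "j = 0"
    with j have "v = 0"
      by simp
    with v(2) show False ..
  qed
  then have "j \<in> K"
    using v(1) unfolding K_def by (simp flip: j)
  define k0 where "k0 = (LEAST k. k \<in> K)"
  have k0: "k0 \<in> K" "\<And>k. k \<in> K \<Longrightarrow> k0 \<le> k"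
    unfolding k0_def using \<open>j \<in> K\<close> by (auto intro: LeastI Least_le)
  define u where "u = (real k0 / d) *\<^sub>R v"
  have u: "u \<in> pos_hull {v} \<inter> lattice" "u \<noteq> 0"
    using k0(1) d v(2) unfolding u_def K_def pos_hull_singleton by auto
  have "\<exists>k::int. w = of_int k *\<^sub>R u" if w: "w \<in> pos_hull {v} \<inter> lattice" for w
  proof -
    obtain j :: nat where j: "w = (real j / d) *\<^sub>R v"
      using lattice_points_on_ray[OF v(1) i w] unfolding d_def by blast
    define q r where "q = j div k0" and "r = j mod k0"
    have "j = q * k0 + r"
      unfolding q_def r_def by simp
    then have "real j = real q * real k0 + real r"
      by simp
    have "w - of_int (int q) *\<^sub>R u = (real j / d - real q * (real k0 / d)) *\<^sub>R v"
      unfolding j u_def by (simp add: scaleR_diff_left)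
    also have "\<dots> = (real r / d) *\<^sub>R v"
      using \<open>real j = _\<close> d by (simp add: field_simps)
    finally have remainder: "w - of_int (int q) *\<^sub>R u = (real r / d) *\<^sub>R v" .
    have "(real r / d) *\<^sub>R v \<in> lattice"
      unfolding remainder[symmetric] using w u(1) by (intro lattice_diff lattice_scaleR_of_int) auto
    moreover have "r < k0"
      using k0(1) unfolding r_def K_def by simp
    then have "r \<notin> K"
      using k0(2)[of r] by auto
    ultimately have "r = 0"
      unfolding K_def by auto
    then have "w = of_int (int q) *\<^sub>R u"
      using remainder by simp
    then show ?thesis
      by blast
  qed
  then show ?thesis
    using u unfolding is_prim_gen_def by blast
qed

lemma is_prim_gen_unique:
  assumes pointed: "\<rho> \<inter> uminus ` \<rho> = {0}" and u: "is_prim_gen \<rho> u" and u': "is_prim_gen \<rho> u'"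
  shows "u' = u"
proof -
  obtain k1 k2 :: int where k1: "u' = of_int k1 *\<^sub>R u" and k2: "u = of_int k2 *\<^sub>R u'"
    using u u' unfolding is_prim_gen_def by blast
  have "u \<noteq> 0"
    using u unfolding is_prim_gen_def by blast
  moreover have "1 *\<^sub>R u = (of_int k2 * of_int k1) *\<^sub>R u"
    using k2 unfolding k1 by (simp only: scaleR_one scaleR_scaleR)
  ultimately have "(1::real) = of_int k2 * of_int k1"
    by (metis scaleR_cancel_right)
  then have "k2 * k1 = 1"
    by (metis of_int_1 of_int_eq_iff of_int_mult)
  then have "k1 = 1 \<or> k1 = -1"
    using zmult_eq_1_iff by blast
  moreover have "k1 \<noteq> -1"
  proof
    assume "k1 = -1"
    then have "u \<in> uminus ` \<rho>"
      using k1 u' unfolding is_prim_gen_def by (auto intro!: image_eqI[where x=u'])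
    then show False
      using pointed u unfolding is_prim_gen_def by blast
  qed
  ultimately show ?thesis
    using k1 by auto
qed

lemma prim_gen_in_ray_lattice:
  assumes "fan \<Sigma>" "\<rho> \<in> rays \<Sigma>"
  shows "prim_gen \<rho> \<in> \<rho> \<inter> lattice" "prim_gen \<rho> \<noteq> 0"
proof -
  obtain v where v: "v \<in> lattice" "v \<noteq> 0" "\<rho> = pos_hull {v}"
    using ray_eq_pos_hull_lattice_vector[OF assms] by blast
  have pointed: "\<rho> \<inter> uminus ` \<rho> = {0}"
    using assms fan_cone_pointed unfolding rays_def by blast
  obtain u where u: "is_prim_gen \<rho> u"
    using lattice_ray_has_prim_gen[OF v(1,2)] v(3) by blast
  have "prim_gen \<rho> = (THE u. is_prim_gen \<rho> u)"
    unfolding prim_gen_def is_prim_gen_def ..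
  then have "is_prim_gen \<rho> (prim_gen \<rho>)"
    using theI[of "is_prim_gen \<rho>", OF u is_prim_gen_unique[OF pointed u]] by simp
  then show "prim_gen \<rho> \<in> \<rho> \<inter> lattice" "prim_gen \<rho> \<noteq> 0"
    unfolding is_prim_gen_def by auto
qed

lemma fan_face_closed: "fan \<Sigma> \<Longrightarrow> \<sigma> \<in> \<Sigma> \<Longrightarrow> \<tau> face_of \<sigma> \<Longrightarrow> \<tau> \<noteq> {} \<Longrightarrow> \<tau> \<in> \<Sigma>"
  unfolding fan_def by blast

lemma fan_inter_face_of: "fan \<Sigma> \<Longrightarrow> \<sigma> \<in> \<Sigma> \<Longrightarrow> \<tau> \<in> \<Sigma> \<Longrightarrow> (\<sigma> \<inter> \<tau>) face_of \<tau>"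
  unfolding fan_def by blast

lemma fan_cone_nonempty: "fan \<Sigma> \<Longrightarrow> \<sigma> \<in> \<Sigma> \<Longrightarrow> \<sigma> \<noteq> {}"
  by (metis empty_iff fan_cone_pos_hull zero_in_pos_hull)

lemma fan_cone_pos_hull_subset:
  assumes "fan \<Sigma>" "\<tau> \<in> \<Sigma>" "T \<subseteq> \<tau>"
  shows "pos_hull T \<subseteq> \<tau>"
proof -
  obtain S where "\<tau> = pos_hull S"
    using fan_cone_pos_hull[OF assms(1,2)] by blast
  then show ?thesis
    using pos_hull_subset_pos_hull assms(3) by blast
qed

lemma irredundant_generator_ray_in_cone_rays:
  fixes \<Sigma> :: "(real^'n) set set"
  assumes fan: "fan \<Sigma>" and \<sigma>: "\<sigma> \<in> \<Sigma>" "\<sigma> = pos_hull S" and S: "finite S"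
    and irredundant: "\<forall>v\<in>S. v \<notin> pos_hull (S - {v})" and v: "v \<in> S"
  shows "pos_hull {v} \<in> cone_rays \<Sigma> \<sigma>"
proof -
  have face: "pos_hull {v} face_of \<sigma>"
    using pointed_pos_hull_irredundant_ray_face[OF S _ irredundant v] fan_cone_pointed[OF fan \<sigma>(1)] \<sigma>(2)
    by simp
  then have "pos_hull {v} \<in> \<Sigma>"
    using fan_face_closed[OF fan \<sigma>(1)] zero_in_pos_hull[of "{v}"] by blast
  moreover have "dim (pos_hull {v}) = 1"
    using irredundant_generator_nonzero[OF irredundant v] by (simp add: dim_pos_hull_singleton)
  ultimately show ?thesis
    using face unfolding cone_rays_def rays_def by simp
qed

lemma fan_cone_eq_pos_hull_prim_gens:
  fixes \<Sigma> :: "(real^'n) set set"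
  assumes fan: "fan \<Sigma>" and \<sigma>: "\<sigma> \<in> \<Sigma>"
  shows "\<sigma> = pos_hull (prim_gen ` cone_rays \<Sigma> \<sigma>)"
proof
  define U where "U = prim_gen ` cone_rays \<Sigma> \<sigma>"
  obtain S0 where S0: "finite S0" "\<sigma> = pos_hull S0"
    using fan_cone_pos_hull[OF fan \<sigma>] by blast
  obtain S where S: "S \<subseteq> S0" "pos_hull S = pos_hull S0" "\<forall>v\<in>S. v \<notin> pos_hull (S - {v})"
    using exists_irredundant_generators[OF S0(1)] by blast
  have "finite S"
    using S(1) S0(1) by (rule finite_subset)
  have \<sigma>_eq: "\<sigma> = pos_hull S"
    using S0(2) S(2) by simp
  have "v \<in> pos_hull U" if v: "v \<in> S" for v
  proof -
    define p where "p = prim_gen (pos_hull {v})"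
    have \<rho>: "pos_hull {v} \<in> cone_rays \<Sigma> \<sigma>"
      using irredundant_generator_ray_in_cone_rays[OF fan \<sigma> \<sigma>_eq \<open>finite S\<close> S(3) v] .
    then have "p \<in> pos_hull {v}" "p \<noteq> 0"
      using prim_gen_in_ray_lattice[OF fan] unfolding p_def cone_rays_def by auto
    then obtain t where t: "t \<ge> 0" "p = t *\<^sub>R v" "t \<noteq> 0"
      unfolding pos_hull_singleton by auto
    have "p \<in> pos_hull U"
      using \<rho> pos_hull_superset[of U] finite_cone_rays[OF fan] unfolding U_def p_def by blast
    then have "(1 / t) *\<^sub>R p \<in> pos_hull U"
      using t(1) by (simp add: pos_hull_scaleR)
    then show ?thesis
      using t(2,3) by simp
  qed
  then show "\<sigma> \<subseteq> pos_hull U"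
    unfolding \<sigma>_eq by (intro pos_hull_subset_pos_hull) blast
  have "U \<subseteq> \<sigma>"
    using prim_gen_in_ray_lattice(1)[OF fan] face_of_imp_subset unfolding U_def cone_rays_def by blast
  then show "pos_hull U \<subseteq> \<sigma>"
    by (rule fan_cone_pos_hull_subset[OF fan \<sigma>])
qed

lemma complete_fan_span_prim_gens:
  fixes \<Sigma> :: "(real^'n) set set"
  assumes "complete_fan \<Sigma>"
  shows "span (prim_gen ` rays \<Sigma>) = UNIV"
proof -
  have fan: "fan \<Sigma>"
    using assms unfolding complete_fan_def by blast
  have "x \<in> span (prim_gen ` rays \<Sigma>)" for x
  proof -
    obtain \<sigma> where \<sigma>: "\<sigma> \<in> \<Sigma>" "x \<in> \<sigma>"
      using assms unfolding complete_fan_def by blast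
    define U where "U = prim_gen ` cone_rays \<Sigma> \<sigma>"
    have "\<sigma> = pos_hull U"
      unfolding U_def by (rule fan_cone_eq_pos_hull_prim_gens[OF fan \<sigma>(1)])
    then have "x \<in> pos_hull U"
      using \<sigma>(2) by simp
    also have "\<dots> \<subseteq> span U"
      by (rule pos_hull_subset_span)
    also have "\<dots> \<subseteq> span (prim_gen ` rays \<Sigma>)"
      unfolding U_def cone_rays_def by (rule span_mono) blast
    finally show ?thesis .
  qed
  then show ?thesis
    by auto
qed

lemma linear_image_fan_cone_subset:
  fixes \<Sigma>a \<Sigma>b :: "(real^'n) set set" and L :: "real^'n \<Rightarrow> real^'n"
  assumes fans: "fan \<Sigma>a" "fan \<Sigma>b" and lin: "linear L" and cones: "\<sigma> \<in> \<Sigma>a" "\<tau> \<in> \<Sigma>b"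
    and gens: "\<And>\<rho>. \<rho> \<in> cone_rays \<Sigma>a \<sigma> \<Longrightarrow> L (prim_gen \<rho>) \<in> \<tau>"
  shows "L ` \<sigma> \<subseteq> \<tau>"
proof -
  define U where "U = prim_gen ` cone_rays \<Sigma>a \<sigma>"
  have "finite U"
    using finite_cone_rays[OF fans(1)] unfolding U_def by blast
  moreover have "\<sigma> = pos_hull U"
    unfolding U_def by (rule fan_cone_eq_pos_hull_prim_gens[OF fans(1) cones(1)])
  ultimately have "L ` \<sigma> \<subseteq> pos_hull (L ` U)"
    using linear_image_pos_hull_subset[OF lin] by simp
  also have "\<dots> \<subseteq> \<tau>"
    using gens unfolding U_def by (intro fan_cone_pos_hull_subset[OF fans(2) cones(2)]) blast
  finally show ?thesis .
qed

text \<open>\<open>L \<sigma> \<subseteq> \<tau>\<close> and \<open>L\<^sup>-\<^sup>1 \<tau> \<subseteq> \<sigma>'\<close> make \<open>\<sigma>\<close> a face of \<open>\<sigma>'\<close>, hence \<open>L \<sigma>\<close> a face of \<open>\<tau>\<close>.\<close>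
lemma linear_image_fan_cone:
  fixes \<Sigma>a \<Sigma>b :: "(real^'n) set set" and L L' :: "real^'n \<Rightarrow> real^'n"
  assumes fans: "fan \<Sigma>a" "fan \<Sigma>b" and lin: "linear L"
    and inverse: "\<And>x. L' (L x) = x" "\<And>x. L (L' x) = x"
    and into: "\<And>\<sigma>. \<sigma> \<in> \<Sigma>a \<Longrightarrow> \<exists>\<tau>\<in>\<Sigma>b. L ` \<sigma> \<subseteq> \<tau>"
    and back_into: "\<And>\<tau>. \<tau> \<in> \<Sigma>b \<Longrightarrow> \<exists>\<sigma>\<in>\<Sigma>a. L' ` \<tau> \<subseteq> \<sigma>"
    and \<sigma>: "\<sigma> \<in> \<Sigma>a"
  shows "L ` \<sigma> \<in> \<Sigma>b"
proof -
  obtain \<tau> where \<tau>: "\<tau> \<in> \<Sigma>b" "L ` \<sigma> \<subseteq> \<tau>"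
    using into[OF \<sigma>] by blast
  obtain \<sigma>' where \<sigma>': "\<sigma>' \<in> \<Sigma>a" "L' ` \<tau> \<subseteq> \<sigma>'"
    using back_into[OF \<tau>(1)] by blast
  have "\<sigma> \<subseteq> \<sigma>'"
  proof
    fix x assume "x \<in> \<sigma>"
    then have "L' (L x) \<in> \<sigma>'"
      using \<tau>(2) \<sigma>'(2) by blast
    then show "x \<in> \<sigma>'"
      by (simp only: inverse(1))
  qed
  moreover have "(\<sigma> \<inter> \<sigma>') face_of \<sigma>'"
    using fan_inter_face_of[OF fans(1) \<sigma> \<sigma>'(1)] .
  ultimately have "\<sigma> face_of \<sigma>'"
    by (simp add: Int_absorb2)
  moreover have "inj L"
    using inverse(1) by (rule inj_on_inverseI)
  ultimately have "L ` \<sigma> face_of L ` \<sigma>'"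
    using face_of_linear_image[OF lin] by blast
  moreover have "\<tau> \<subseteq> L ` \<sigma>'"
  proof
    fix y assume "y \<in> \<tau>"
    then have "L' y \<in> \<sigma>'"
      using \<sigma>'(2) by blast
    then show "y \<in> L ` \<sigma>'"
      using inverse(2)[of y] by (metis image_eqI)
  qed
  ultimately have "L ` \<sigma> face_of \<tau>"
    using face_of_subset \<tau>(2) by blast
  moreover have "L ` \<sigma> \<noteq> {}"
    using fan_cone_nonempty[OF fans(1) \<sigma>] by blast
  ultimately show ?thesis
    using fan_face_closed[OF fans(2) \<tau>(1)] by blast
qed

section \<open>Amply equivalent fans\<close>

lemma amply_equivalentD:
  assumes "amply_equivalent \<Sigma>1 \<Sigma>2 \<Psi>"
  shows "fan \<Sigma>1" "fan \<Sigma>2" "complete_fan \<Sigma>1" "complete_fan \<Sigma>2"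
    and "bij_betw \<Psi> (rays \<Sigma>1) (rays \<Sigma>2)"
    and "C \<subseteq> rays \<Sigma>1 \<Longrightarrow> primitive_collection \<Sigma>1 C \<longleftrightarrow> primitive_collection \<Sigma>2 (\<Psi> ` C)"
    and "(\<Sum>\<rho>\<in>rays \<Sigma>1. of_int (a \<rho>) *\<^sub>R prim_gen \<rho>) = 0 \<longleftrightarrow>
         (\<Sum>\<rho>\<in>rays \<Sigma>1. of_int (a \<rho>) *\<^sub>R prim_gen (\<Psi> \<rho>)) = 0"
  using assms unfolding amply_equivalent_def complete_fan_def by (elim conjE; blast)+

lemma exists_primitive_collection_subset:
  assumes fan: "fan \<Sigma>" and S: "S \<subseteq> rays \<Sigma>" and not_in_cone: "\<forall>\<sigma>\<in>\<Sigma>. \<not> S \<subseteq> cone_rays \<Sigma> \<sigma>"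
  shows "\<exists>C\<subseteq>S. primitive_collection \<Sigma> C"
proof -
  define M where "M = {C. C \<subseteq> S \<and> (\<forall>\<sigma>\<in>\<Sigma>. \<not> C \<subseteq> cone_rays \<Sigma> \<sigma>)}"
  have "finite S"
    using S finite_rays[OF fan] finite_subset by blast
  then have "finite M"
    unfolding M_def by (rule finite_subset[rotated, OF finite_Pow_iff[THEN iffD2]]) blast
  moreover have "M \<noteq> {}"
    unfolding M_def using not_in_cone by blast
  ultimately have "\<exists>C\<in>M. \<not> (\<exists>D\<in>M. D < C)"
    by (rule ex_min_if_finite)
  then obtain C where C: "C \<in> M" "\<not> (\<exists>D\<in>M. D < C)" ..
  have "primitive_collection \<Sigma> C"
    unfolding primitive_collection_def
  proof (intro conjI allI impI)
    show "C \<subseteq> rays \<Sigma>" "\<forall>\<sigma>\<in>\<Sigma>. \<not> C \<subseteq> cone_rays \<Sigma> \<sigma>"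
      using C(1) S unfolding M_def by blast+
    fix D assume "D \<subset> C"
    then have "D \<notin> M" "D \<subseteq> S"
      using C unfolding M_def by auto
    then show "\<exists>\<sigma>\<in>\<Sigma>. D \<subseteq> cone_rays \<Sigma> \<sigma>"
      unfolding M_def by blast
  qed
  then show ?thesis
    using C(1) unfolding M_def by blast
qed

lemma primitive_collection_not_in_cone:
  "primitive_collection \<Sigma> C \<Longrightarrow> \<sigma> \<in> \<Sigma> \<Longrightarrow> \<not> C \<subseteq> cone_rays \<Sigma> \<sigma>"
  unfolding primitive_collection_def by blast

lemma amply_equivalent_sym:
  assumes "amply_equivalent \<Sigma>1 \<Sigma>2 \<Psi>"
  shows "amply_equivalent \<Sigma>2 \<Sigma>1 (inv_into (rays \<Sigma>1) \<Psi>)"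
proof -
  define \<Phi> where "\<Phi> = inv_into (rays \<Sigma>1) \<Psi>"
  note fans = amply_equivalentD(3,4)[OF assms]
  note bij = amply_equivalentD(5)[OF assms]
  note pc = amply_equivalentD(6)[OF assms]
  note rel = amply_equivalentD(7)[OF assms]
  have bij': "bij_betw \<Phi> (rays \<Sigma>2) (rays \<Sigma>1)"
    unfolding \<Phi>_def using bij by (rule bij_betw_inv_into)
  have \<Phi>_\<Psi>: "\<Phi> (\<Psi> \<rho>) = \<rho>" if "\<rho> \<in> rays \<Sigma>1" for \<rho>
    using bij that unfolding \<Phi>_def bij_betw_def by simp
  have pc': "primitive_collection \<Sigma>2 C \<longleftrightarrow> primitive_collection \<Sigma>1 (\<Phi> ` C)"
    if "C \<subseteq> rays \<Sigma>2" for C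
  proof -
    have "\<Phi> ` C \<subseteq> rays \<Sigma>1"
      using bij' that bij_betw_imp_surj_on by blast
    moreover have "\<Psi> ` \<Phi> ` C = C"
      unfolding \<Phi>_def using bij that by (intro image_inv_into_cancel) (auto simp: bij_betw_def)
    ultimately show ?thesis
      using pc[of "\<Phi> ` C"] by simp
  qed
  have rel': "(\<Sum>\<tau>\<in>rays \<Sigma>2. of_int (a \<tau>) *\<^sub>R prim_gen \<tau>) = 0 \<longleftrightarrow>
                (\<Sum>\<tau>\<in>rays \<Sigma>2. of_int (a \<tau>) *\<^sub>R prim_gen (\<Phi> \<tau>)) = 0" for a
  proof -
    have lhs: "(\<Sum>\<tau>\<in>rays \<Sigma>2. of_int (a \<tau>) *\<^sub>R prim_gen \<tau>)
        = (\<Sum>\<rho>\<in>rays \<Sigma>1. of_int (a (\<Psi> \<rho>)) *\<^sub>R prim_gen (\<Psi> \<rho>))"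
      by (rule sum.reindex_bij_betw[OF bij, symmetric])
    have "(\<Sum>\<tau>\<in>rays \<Sigma>2. of_int (a \<tau>) *\<^sub>R prim_gen (\<Phi> \<tau>))
        = (\<Sum>\<rho>\<in>rays \<Sigma>1. of_int (a (\<Psi> \<rho>)) *\<^sub>R prim_gen (\<Phi> (\<Psi> \<rho>)))"
      by (rule sum.reindex_bij_betw[OF bij, symmetric])
    also have "\<dots> = (\<Sum>\<rho>\<in>rays \<Sigma>1. of_int (a (\<Psi> \<rho>)) *\<^sub>R prim_gen \<rho>)"
      using \<Phi>_\<Psi> by (intro sum.cong) simp_all
    finally show ?thesis
      using rel[of "a \<circ> \<Psi>"] lhs by simp
  qed
  show ?thesis
    unfolding amply_equivalent_def \<Phi>_def[symmetric]
    using fans bij' pc' rel' by simp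
qed

lemma amply_equivalent_cone_rays_image:
  assumes ae: "amply_equivalent \<Sigma>1 \<Sigma>2 \<Psi>" and \<sigma>: "\<sigma> \<in> \<Sigma>1"
  shows "\<exists>\<tau>\<in>\<Sigma>2. \<Psi> ` cone_rays \<Sigma>1 \<sigma> \<subseteq> cone_rays \<Sigma>2 \<tau>"
proof (rule ccontr)
  assume not_in_cone: "\<not> ?thesis"
  note fan2 = amply_equivalentD(2)[OF ae]
  note bij = amply_equivalentD(5)[OF ae]
  note pc = amply_equivalentD(6)[OF ae]
  have "\<Psi> ` cone_rays \<Sigma>1 \<sigma> \<subseteq> rays \<Sigma>2"
    using bij_betw_imp_surj_on[OF bij] unfolding cone_rays_def by blast
  moreover have "\<forall>\<tau>\<in>\<Sigma>2. \<not> \<Psi> ` cone_rays \<Sigma>1 \<sigma> \<subseteq> cone_rays \<Sigma>2 \<tau>"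
    using not_in_cone by blast
  ultimately have "\<exists>D\<subseteq>\<Psi> ` cone_rays \<Sigma>1 \<sigma>. primitive_collection \<Sigma>2 D"
    by (rule exists_primitive_collection_subset[OF fan2])
  then obtain D where D: "D \<subseteq> \<Psi> ` cone_rays \<Sigma>1 \<sigma>" "primitive_collection \<Sigma>2 D"
    by blast
  define C where "C = {\<rho>\<in>cone_rays \<Sigma>1 \<sigma>. \<Psi> \<rho> \<in> D}"
  have "C \<subseteq> rays \<Sigma>1"
    unfolding C_def cone_rays_def by blast
  moreover have "\<Psi> ` C = D"
    using D(1) unfolding C_def by auto
  ultimately have "primitive_collection \<Sigma>1 C"
    using pc D(2) by simp
  moreover have "C \<subseteq> cone_rays \<Sigma>1 \<sigma>"
    unfolding C_def by blast
  ultimately show False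
    using primitive_collection_not_in_cone \<sigma> by blast
qed

lemma amply_equivalent_linear_image_cone_subset:
  fixes L :: "real^'n \<Rightarrow> real^'n"
  assumes ae: "amply_equivalent \<Sigma>1 \<Sigma>2 \<Psi>" and lin: "linear L"
    and gens: "\<And>\<rho>. \<rho> \<in> rays \<Sigma>1 \<Longrightarrow> L (prim_gen \<rho>) = prim_gen (\<Psi> \<rho>)" and \<sigma>: "\<sigma> \<in> \<Sigma>1"
  shows "\<exists>\<tau>\<in>\<Sigma>2. L ` \<sigma> \<subseteq> \<tau>"
proof -
  note fans = amply_equivalentD(1,2)[OF ae]
  obtain \<tau> where \<tau>: "\<tau> \<in> \<Sigma>2" "\<Psi> ` cone_rays \<Sigma>1 \<sigma> \<subseteq> cone_rays \<Sigma>2 \<tau>"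
    using amply_equivalent_cone_rays_image[OF ae \<sigma>] by blast
  have "L (prim_gen \<rho>) \<in> \<tau>" if "\<rho> \<in> cone_rays \<Sigma>1 \<sigma>" for \<rho>
  proof -
    have "\<Psi> \<rho> \<in> rays \<Sigma>2" "\<Psi> \<rho> \<subseteq> \<tau>"
      using \<tau>(2) that face_of_imp_subset unfolding cone_rays_def by blast+
    then show ?thesis
      using gens prim_gen_in_ray_lattice(1)[OF fans(2)] that unfolding cone_rays_def by auto
  qed
  then show ?thesis
    using linear_image_fan_cone_subset[OF fans lin \<sigma> \<tau>(1)] \<tau>(1) by blast
qed

lemma amply_equivalent_matrix_inv_prim_gens:
  assumes ae: "amply_equivalent \<Sigma>1 \<Sigma>2 \<Psi>" and A: "invertible A"
    and gens: "\<And>\<rho>. \<rho> \<in> rays \<Sigma>1 \<Longrightarrow> A *v prim_gen \<rho> = prim_gen (\<Psi> \<rho>)" and \<tau>: "\<tau> \<in> rays \<Sigma>2"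
  shows "matrix_inv A *v prim_gen \<tau> = prim_gen (inv_into (rays \<Sigma>1) \<Psi> \<tau>)"
proof -
  note bij = amply_equivalentD(5)[OF ae]
  then have "inv_into (rays \<Sigma>1) \<Psi> \<tau> \<in> rays \<Sigma>1" "\<Psi> (inv_into (rays \<Sigma>1) \<Psi> \<tau>) = \<tau>"
    using \<tau> by (auto simp: bij_betw_def inv_into_into f_inv_into_f)
  then have "prim_gen \<tau> = A *v prim_gen (inv_into (rays \<Sigma>1) \<Psi> \<tau>)"
    using gens by simp
  then show ?thesis
    using matrix_inv_cancel_left[OF A] by simp
qed

lemma amply_equivalent_matrix_image_cone:
  assumes ae: "amply_equivalent \<Sigma>1 \<Sigma>2 \<Psi>" and A: "invertible A"
    and gens: "\<And>\<rho>. \<rho> \<in> rays \<Sigma>1 \<Longrightarrow> A *v prim_gen \<rho> = prim_gen (\<Psi> \<rho>)" and \<sigma>: "\<sigma> \<in> \<Sigma>1"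
  shows "(*v) A ` \<sigma> \<in> \<Sigma>2"
proof (rule linear_image_fan_cone[where L' = "(*v) (matrix_inv A)"])
  show "fan \<Sigma>1" "fan \<Sigma>2"
    using amply_equivalentD(1,2)[OF ae] .
  show "\<exists>\<tau>\<in>\<Sigma>2. (*v) A ` \<sigma> \<subseteq> \<tau>" if "\<sigma> \<in> \<Sigma>1" for \<sigma>
    using amply_equivalent_linear_image_cone_subset[OF ae matrix_vector_mul_linear gens that] .
  show "\<exists>\<sigma>\<in>\<Sigma>1. (*v) (matrix_inv A) ` \<tau> \<subseteq> \<sigma>" if "\<tau> \<in> \<Sigma>2" for \<tau>
    using amply_equivalent_linear_image_cone_subset[OF amply_equivalent_sym[OF ae]
        matrix_vector_mul_linear amply_equivalent_matrix_inv_prim_gens[OF ae A gens] that] .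
qed (use \<sigma> matrix_inv_cancel_left[OF A] matrix_inv_cancel_right[OF A] in auto)

lemma amply_equivalent_matrix_image_cone_iff:
  assumes ae: "amply_equivalent \<Sigma>1 \<Sigma>2 \<Psi>" and A: "invertible A"
    and gens: "\<And>\<rho>. \<rho> \<in> rays \<Sigma>1 \<Longrightarrow> A *v prim_gen \<rho> = prim_gen (\<Psi> \<rho>)"
  shows "\<sigma> \<in> \<Sigma>1 \<longleftrightarrow> (*v) A ` \<sigma> \<in> \<Sigma>2"
proof
  assume "(*v) A ` \<sigma> \<in> \<Sigma>2"
  then have "(*v) (matrix_inv A) ` (*v) A ` \<sigma> \<in> \<Sigma>1"
    using amply_equivalent_matrix_image_cone[OF amply_equivalent_sym[OF ae]
          invertible_matrix_inv[OF A] amply_equivalent_matrix_inv_prim_gens[OF ae A gens]]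
    by blast
  then show "\<sigma> \<in> \<Sigma>1"
    by (simp add: image_image matrix_inv_cancel_left[OF A])
qed (rule amply_equivalent_matrix_image_cone[OF ae A gens])

lemma amply_equivalent_rat_matrix:
  fixes \<Sigma>1 \<Sigma>2 :: "(real^'n) set set"
  assumes ae: "amply_equivalent \<Sigma>1 \<Sigma>2 \<Psi>"
  shows "\<exists>A\<in>rat_matrices. \<forall>\<rho>\<in>rays \<Sigma>1. A *v prim_gen \<rho> = prim_gen (\<Psi> \<rho>)"
proof (rule exists_rat_matrix_mapping[where u = prim_gen and w = "\<lambda>\<rho>. prim_gen (\<Psi> \<rho>)"])
  show finite: "finite (rays \<Sigma>1)"
    using finite_rays[OF amply_equivalentD(1)[OF ae]] .
  show "span (prim_gen ` rays \<Sigma>1) = UNIV"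
    using complete_fan_span_prim_gens[OF amply_equivalentD(3)[OF ae]] .
  show "prim_gen \<rho> \<in> rat_vecs \<and> prim_gen (\<Psi> \<rho>) \<in> rat_vecs" if "\<rho> \<in> rays \<Sigma>1" for \<rho>
  proof -
    have "\<Psi> \<rho> \<in> rays \<Sigma>2"
      using bij_betw_apply[OF amply_equivalentD(5)[OF ae] that] .
    then show ?thesis
      using prim_gen_in_ray_lattice(1)[OF amply_equivalentD(1)[OF ae] that]
        prim_gen_in_ray_lattice(1)[OF amply_equivalentD(2)[OF ae]]
        lattice_subset_rat_vecs by blast
  qed
  have int_rel: "(\<Sum>\<rho>\<in>rays \<Sigma>1. of_int (a \<rho>) *\<^sub>R prim_gen (\<Psi> \<rho>)) = 0"
    if "(\<Sum>\<rho>\<in>rays \<Sigma>1. of_int (a \<rho>) *\<^sub>R prim_gen \<rho>) = 0" for a :: "(real^'n) set \<Rightarrow> int"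
    using amply_equivalentD(7)[OF ae, of a] that by simp
  show "(\<Sum>\<rho>\<in>rays \<Sigma>1. q \<rho> *\<^sub>R prim_gen (\<Psi> \<rho>)) = 0"
    if "\<And>\<rho>. \<rho> \<in> rays \<Sigma>1 \<Longrightarrow> q \<rho> \<in> \<rat>" "(\<Sum>\<rho>\<in>rays \<Sigma>1. q \<rho> *\<^sub>R prim_gen \<rho>) = 0" for q
    using rat_relations_if_int_relations[OF finite int_rel that] .
qed

lemma amply_equivalent_matrix_invertible:
  fixes \<Sigma>1 \<Sigma>2 :: "(real^'n) set set"
  assumes ae: "amply_equivalent \<Sigma>1 \<Sigma>2 \<Psi>"
    and gens: "\<And>\<rho>. \<rho> \<in> rays \<Sigma>1 \<Longrightarrow> A *v prim_gen \<rho> = prim_gen (\<Psi> \<rho>)"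
  shows "invertible A"
proof (rule invertible_if_range_spans)
  show "span (prim_gen ` rays \<Sigma>2) = UNIV"
    using complete_fan_span_prim_gens[OF amply_equivalentD(4)[OF ae]] .
  show "prim_gen ` rays \<Sigma>2 \<subseteq> range ((*v) A)"
  proof
    fix y assume "y \<in> prim_gen ` rays \<Sigma>2"
    then obtain \<tau> where \<tau>: "\<tau> \<in> rays \<Sigma>2" "y = prim_gen \<tau>" ..
    then have "\<tau> \<in> \<Psi> ` rays \<Sigma>1"
      using bij_betw_imp_surj_on[OF amply_equivalentD(5)[OF ae]] by simp
    then obtain \<rho> where "\<rho> \<in> rays \<Sigma>1" "y = prim_gen (\<Psi> \<rho>)"
      using \<tau>(2) by blast
    then have "y = A *v prim_gen \<rho>"
      using gens by simp
    then show "y \<in> range ((*v) A)"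
      by blast
  qed
qed

theorem proposition5p25:
  fixes \<Sigma>1 \<Sigma>2 :: "(real^'n) set set"
    and \<Psi> :: "(real^'n) set \<Rightarrow> (real^'n) set"
  assumes "complete_fan \<Sigma>1" and "complete_fan \<Sigma>2"
    and "amply_equivalent \<Sigma>1 \<Sigma>2 \<Psi>"
  shows "\<exists>A :: real^'n^'n.
           (\<forall>i j. A $ i $ j \<in> \<rat>) \<and> invertible A
         \<and> (\<forall>\<rho>\<in>rays \<Sigma>1. A *v prim_gen \<rho> = prim_gen (\<Psi> \<rho>))
         \<and> (\<forall>\<sigma>. sc_rat_cone \<sigma> \<longrightarrow> (\<sigma> \<in> \<Sigma>1 \<longleftrightarrow> (\<lambda>x. A *v x) ` \<sigma> \<in> \<Sigma>2))
         \<and> (\<forall>b :: (real^'n) set \<Rightarrow> real. (\<forall>\<rho>. b \<rho> \<in> \<rat>) \<longrightarrow>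
              A *v (\<Sum>\<rho>\<in>rays \<Sigma>1. b \<rho> *\<^sub>R prim_gen \<rho>) = (\<Sum>\<rho>\<in>rays \<Sigma>1. b \<rho> *\<^sub>R prim_gen (\<Psi> \<rho>))
            \<and> ((\<Sum>\<rho>\<in>rays \<Sigma>1. b \<rho> *\<^sub>R prim_gen \<rho>) = 0 \<longleftrightarrow>
               (\<Sum>\<rho>\<in>rays \<Sigma>1. b \<rho> *\<^sub>R prim_gen (\<Psi> \<rho>)) = 0))"
proof -
  note ae = assms(3)
  obtain A where rat: "A \<in> rat_matrices" and gens: "\<forall>\<rho>\<in>rays \<Sigma>1. A *v prim_gen \<rho> = prim_gen (\<Psi> \<rho>)"
    using amply_equivalent_rat_matrix[OF ae] by blast
  have inv: "invertible A"
    using amply_equivalent_matrix_invertible[OF ae] gens by blast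
  have cones: "\<sigma> \<in> \<Sigma>1 \<longleftrightarrow> (\<lambda>x. A *v x) ` \<sigma> \<in> \<Sigma>2" for \<sigma>
    using amply_equivalent_matrix_image_cone_iff[OF ae inv] gens by blast
  have sums: "A *v (\<Sum>\<rho>\<in>rays \<Sigma>1. b \<rho> *\<^sub>R prim_gen \<rho>) = (\<Sum>\<rho>\<in>rays \<Sigma>1. b \<rho> *\<^sub>R prim_gen (\<Psi> \<rho>))"
    for b :: "(real^'n) set \<Rightarrow> real"
    using gens by (simp add: matrix_vector_mult_sum_scaleR)
  have zeros: "(\<Sum>\<rho>\<in>rays \<Sigma>1. b \<rho> *\<^sub>R prim_gen \<rho>) = 0 \<longleftrightarrow>
      (\<Sum>\<rho>\<in>rays \<Sigma>1. b \<rho> *\<^sub>R prim_gen (\<Psi> \<rho>)) = 0" for b :: "(real^'n) set \<Rightarrow> real"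
    using invertible_mult_vec_eq_0[OF inv] by (simp flip: sums)
  have "\<forall>i j. A $ i $ j \<in> \<rat>"
    using rat unfolding rat_matrices_def rat_vecs_def by blast
  then show ?thesis
    using inv gens cones sums zeros by (intro exI[of _ A]) simp
qed

end
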